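(* Let $n\ge 2$ and let $p^Y$ be a probability distribution on $\{1,\dots,n\}$ with nonincreasing rearrangement $p^Y_\downarrow$. Then the map $\mathcal{E}\mapsto S(\tilde p^Y_{\mathcal{E}})$ is strictly increasing on $[0,\,1-p^Y_\downarrow(1)]$.
   Context: $S(p)=-\sum_i p(i)\ln p(i)$. $p^Y_\downarrow$ is $p^Y$ rearranged so that $p^Y_\downarrow(1)\ge\dots\ge p^Y_\downarrow(n)$. For $\mathcal{E}\ge0$: if $p^Y_\downarrow(1)\ge 1-\mathcal{E}$, $\tilde p^Y_{\mathcal{E}}=p^Y_\downarrow$; otherwise let $M_{\mathcal{E}}$ be the largest $m\in\{2,\dots,n\}$ with $\frac{\mathcal{E}-\sum_{y=m+1}^n p^Y_\downarrow(y)}{m-1}<p^Y_\downarrow(m)$, and set $\tilde p^Y_{\mathcal{E}}(1)=1-\mathcal{E}$, $\tilde p^Y_{\mathcal{E}}(y)=\frac{\mathcal{E}-\sum_{y'=M_{\mathcal{E}}+1}^n p^Y_\downarrow(y')}{M_{\mathcal{E}}-1}$ for $2\le y\le M_{\mathcal{E}}$, and $\tilde p^Y_{\mathcal{E}}(y)=p^Y_\downarrow(y)$ for $y>M_{\mathcal{E}}$. *)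

theory Defs
  imports "HOL-Analysis.Analysis"
begin

text \<open>Distributions on {1..n} are functions nat => real; only the values on {1..n} matter.\<close>

definition is_distr :: "nat \<Rightarrow> (nat \<Rightarrow> real) \<Rightarrow> bool" where
  "is_distr n p \<longleftrightarrow> (\<forall>i\<in>{1..n}. 0 \<le> p i) \<and> (\<Sum>i\<in>{1..n}. p i) = 1"

text \<open>Shannon entropy with natural log (note 0 * ln 0 = 0 in Isabelle).\<close>
definition entropy :: "nat \<Rightarrow> (nat \<Rightarrow> real) \<Rightarrow> real" where
  "entropy n p = - (\<Sum>i\<in>{1..n}. p i * ln (p i))"

text \<open>Nonincreasing rearrangement: p composed with a permutation of {1..n} sorting it
  in nonincreasing order (the resulting function is independent of the choice).\<close>
definition sort_desc :: "nat \<Rightarrow> (nat \<Rightarrow> real) \<Rightarrow> (nat \<Rightarrow> real)" where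
  "sort_desc n p = p \<circ> (SOME \<sigma>. \<sigma> permutes {1..n} \<and>
       (\<forall>i j. 1 \<le> i \<and> i \<le> j \<and> j \<le> n \<longrightarrow> p (\<sigma> j) \<le> p (\<sigma> i)))"

definition M_idx :: "nat \<Rightarrow> (nat \<Rightarrow> real) \<Rightarrow> real \<Rightarrow> nat" where
  "M_idx n q E = (GREATEST m. m \<in> {2..n} \<and>
       (E - (\<Sum>y\<in>{m+1..n}. q y)) / real (m - 1) < q m)"

definition tilde :: "nat \<Rightarrow> (nat \<Rightarrow> real) \<Rightarrow> real \<Rightarrow> (nat \<Rightarrow> real)" where
  "tilde n q E =
    (if 1 - E \<le> q 1 then q
     else (let M = M_idx n q E in
       (\<lambda>y. if y = 1 then 1 - E
            else if 2 \<le> y \<and> y \<le> M then (E - (\<Sum>y'\<in>{M+1..n}. q y')) / real (M - 1)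
            else q y)))"

end

theory Submission
  imports Defs
begin

text \<open>Let \<open>q\<close> be the nonincreasing rearrangement of \<open>p\<close>. For \<open>E < 1 - q 1\<close> the vector
  \<open>tilde n q E\<close> puts mass \<open>1 - E\<close> on the first coordinate and water-fills the others:
  coordinate \<open>k \<ge> 2\<close> becomes \<open>min (q k) v\<close>, where the level \<open>v\<close> is fixed by
  \<open>\<Sum>k\<ge>2. min (q k) v = E\<close>; at \<open>E = 1 - q 1\<close> it is \<open>q\<close> itself, with level \<open>q 1\<close>.
  Raising \<open>E\<close> therefore lowers the top entry and raises the level, hence weakly raises every
  other entry, all of which stay below the new top entry \<open>u\<^sub>1\<close>. Comparing \<open>x ln x\<close>
  with its tangent of slope \<open>ln u\<^sub>1 + 1\<close>, and using that the total mass is unchanged,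
  shows that the entropy strictly increases.\<close>

lemma sorting_permutation_exists:
  fixes p :: "nat \<Rightarrow> 'a::linorder"
  shows "\<exists>\<sigma>. \<sigma> permutes {1..n} \<and> (\<forall>i j. 1 \<le> i \<and> i \<le> j \<and> j \<le> n \<longrightarrow> p (\<sigma> j) \<le> p (\<sigma> i))"
proof -
  define ys where "ys = sort_key p [1..<Suc n]"
  have len: "length ys = n" and dis: "distinct ys" and set_ys: "set ys = {1..n}"
    and sorted_ys: "sorted (map p ys)"
    by (auto simp: ys_def)
  define \<sigma> where "\<sigma> i = (if i \<in> {1..n} then ys ! (n - i) else i)" for i
  have "bij_betw ((!) ys) {..<n} {1..n}"
    using bij_betw_nth[OF dis] len set_ys by simp
  moreover have "bij_betw (\<lambda>i. n - i) {1..n} {..<n}"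
    by (rule bij_betw_byWitness[where f'="\<lambda>i. n - i"]) auto
  ultimately have "bij_betw \<sigma> {1..n} {1..n}"
    by (auto simp: \<sigma>_def intro: bij_betw_cong[THEN iffD1, OF _ bij_betw_trans])
  then have "\<sigma> permutes {1..n}"
    by (rule bij_imp_permutes) (auto simp: \<sigma>_def)
  moreover have "p (\<sigma> j) \<le> p (\<sigma> i)" if "1 \<le> i" "i \<le> j" "j \<le> n" for i j
    using sorted_nth_mono[OF sorted_ys, of "n - j" "n - i"] that len by (simp add: \<sigma>_def)
  ultimately show ?thesis by blast
qed

lemma sort_desc_permutation:
  obtains \<sigma> where "\<sigma> permutes {1..n}" "sort_desc n p = p \<circ> \<sigma>"
    "\<And>i j. 1 \<le> i \<Longrightarrow> i \<le> j \<Longrightarrow> j \<le> n \<Longrightarrow> sort_desc n p j \<le> sort_desc n p i"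
  using someI_ex[OF sorting_permutation_exists[of n p]] that
  unfolding sort_desc_def by auto

lemma sort_desc_antitone:
  "1 \<le> i \<Longrightarrow> i \<le> j \<Longrightarrow> j \<le> n \<Longrightarrow> sort_desc n p j \<le> sort_desc n p i"
  by (metis sort_desc_permutation)

lemma is_distr_sort_desc:
  assumes "is_distr n p"
  shows "is_distr n (sort_desc n p)"
proof -
  obtain \<sigma> where \<sigma>: "\<sigma> permutes {1..n}" and sorted: "sort_desc n p = p \<circ> \<sigma>"
    by (rule sort_desc_permutation)
  show ?thesis
    using assms permutes_in_image[OF \<sigma>] sum.permute[OF \<sigma>, of p]
    unfolding is_distr_def sorted by auto
qed

lemma is_distr_first_pos:
  assumes "is_distr n q" "1 \<le> n"
    and antitone: "\<And>i j. 1 \<le> i \<Longrightarrow> i \<le> j \<Longrightarrow> j \<le> n \<Longrightarrow> q j \<le> q i"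
  shows "0 < q 1"
proof (rule ccontr)
  assume "\<not> 0 < q 1"
  then have "q k = 0" if "k \<in> {1..n}" for k
    using assms(1) antitone[of 1 k] that unfolding is_distr_def by force
  then have "sum q {1..n} = 0"
    by simp
  then show False
    using assms(1) unfolding is_distr_def by simp
qed

lemma sum_split_first:
  fixes f :: "nat \<Rightarrow> 'a::comm_monoid_add"
  assumes "1 \<le> n"
  shows "sum f {1..n} = f 1 + sum f {2..n}"
  using sum.atLeast_Suc_atMost[OF assms, of f] by (simp add: numeral_2_eq_2)

lemma xlnx_above_tangent:
  fixes a b :: real
  assumes "0 \<le> a" "0 < b" "a \<noteq> b"
  shows "(ln b + 1) * (a - b) < a * ln a - b * ln b"
proof (cases "a = 0")
  case True
  then show ?thesis using assms by (simp add: algebra_simps)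
next
  case False
  with assms have "0 < a" by simp
  then have "ln b - ln a < (b - a) / a"
    using ln_diff_less[of b a] assms by simp
  then have "a * (ln b - ln a) < b - a"
    using \<open>0 < a\<close> by (simp add: field_simps)
  then show ?thesis by (simp add: algebra_simps)
qed

lemma entropy_less_by_flattening:
  fixes t u :: "nat \<Rightarrow> real"
  assumes "1 \<le> n" and same_mass: "sum t {1..n} = sum u {1..n}"
    and "0 < u 1" "u 1 < t 1"
    and rest: "\<And>k. k \<in> {2..n} \<Longrightarrow> 0 \<le> t k \<and> t k \<le> u k \<and> u k \<le> u 1"
  shows "entropy n t < entropy n u"
proof -
  define L where "L = ln (u 1) + 1"
  define g where "g k = t k * ln (t k) - u k * ln (u k)" for k
  have top: "L * (t 1 - u 1) < g 1"
    unfolding L_def g_def using xlnx_above_tangent[of "t 1" "u 1"] assms(3,4) by simp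
  have others: "L * (t k - u k) \<le> g k" if k: "k \<in> {2..n}" for k
  proof (cases "t k = u k")
    case True
    then show ?thesis by (simp add: g_def)
  next
    case False
    with rest[OF k] have "0 < u k" "t k < u k" by auto
    then have "L * (t k - u k) \<le> (ln (u k) + 1) * (t k - u k)"
      using rest[OF k] unfolding L_def by (intro mult_right_mono_neg) auto
    also have "\<dots> \<le> g k"
      unfolding g_def using xlnx_above_tangent[of "t k" "u k"] rest[OF k] False \<open>0 < u k\<close> by simp
    finally show ?thesis .
  qed
  have "entropy n u - entropy n t = sum g {1..n}"
    unfolding entropy_def g_def by (simp add: sum_subtractf)
  also have "\<dots> = g 1 + sum g {2..n}"
    by (rule sum_split_first[OF \<open>1 \<le> n\<close>])
  also have "\<dots> > L * (t 1 - u 1) + (\<Sum>k\<in>{2..n}. L * (t k - u k))"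
    using add_less_le_mono[OF top sum_mono[OF others]] .
  also have "L * (t 1 - u 1) + (\<Sum>k\<in>{2..n}. L * (t k - u k)) = (\<Sum>k\<in>{1..n}. L * (t k - u k))"
    by (rule sum_split_first[OF \<open>1 \<le> n\<close>, symmetric])
  also have "\<dots> = L * (sum t {1..n} - sum u {1..n})"
    by (simp add: sum_distrib_left[symmetric] sum_subtractf)
  finally show ?thesis using same_mass by simp
qed

lemma M_idx_level:
  fixes q :: "nat \<Rightarrow> real"
  assumes "2 \<le> n" "E < sum q {2..n}"
  defines "M \<equiv> M_idx n q E"
  defines "v \<equiv> (E - sum q {M+1..n}) / real (M - 1)"
  shows "2 \<le> M" "M \<le> n" "v < q M" "M < n \<Longrightarrow> q (M + 1) \<le> v"
proof -
  define P where "P m \<longleftrightarrow> m \<in> {2..n} \<and> (E - sum q {m+1..n}) / real (m - 1) < q m" for m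
  have M: "M = Greatest P"
    unfolding M_def M_idx_def P_def by simp
  have "sum q {2..n} = q 2 + sum q {3..n}"
    using sum.atLeast_Suc_atMost[of 2 n q] assms(1) by (simp add: numeral_3_eq_3)
  then have "P 2"
    unfolding P_def using assms(1,2) by simp
  have bounded: "\<And>m. P m \<Longrightarrow> m \<le> n"
    unfolding P_def by simp
  have "P M"
    unfolding M by (rule GreatestI_nat[of P 2 n, OF \<open>P 2\<close> bounded])
  then show "2 \<le> M" "M \<le> n" "v < q M"
    unfolding P_def v_def by auto
  show "q (M + 1) \<le> v" if "M < n"
  proof -
    have "\<not> P (M + 1)"
      using Greatest_le_nat[of P _ n, OF _ bounded] unfolding M[symmetric] by force
    then have "q (M + 1) * real M \<le> E - sum q {M+2..n}"
      unfolding P_def using that \<open>2 \<le> M\<close> by (simp add: not_less pos_le_divide_eq numeral_2_eq_2)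
    moreover have "sum q {M+1..n} = q (M + 1) + sum q {M+2..n}"
      using sum.atLeast_Suc_atMost[of "M + 1" n q] that by simp
    moreover have "real (M - 1) * v = E - sum q {M+1..n}"
      unfolding v_def using \<open>2 \<le> M\<close> by simp
    ultimately have "real (M - 1) * q (M + 1) \<le> real (M - 1) * v"
      using \<open>2 \<le> M\<close> by (simp add: algebra_simps)
    then show ?thesis
      using \<open>2 \<le> M\<close> by simp
  qed
qed

lemma tilde_water_level_interior:
  fixes q :: "nat \<Rightarrow> real"
  assumes "2 \<le> n" "sum q {1..n} = 1" "0 \<le> E" "E < 1 - q 1"
    and nonneg: "\<And>k. k \<in> {2..n} \<Longrightarrow> 0 \<le> q k"
    and antitone: "\<And>i j. 1 \<le> i \<Longrightarrow> i \<le> j \<Longrightarrow> j \<le> n \<Longrightarrow> q j \<le> q i"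
  obtains v where "0 \<le> v" "tilde n q E 1 = 1 - E"
    "\<forall>k\<in>{2..n}. tilde n q E k = min (q k) v" "(\<Sum>k\<in>{2..n}. min (q k) v) = E"
    "sum (tilde n q E) {1..n} = 1"
proof -
  define M where "M = M_idx n q E"
  define v where "v = (E - sum q {M+1..n}) / real (M - 1)"
  have "E < sum q {2..n}"
    using sum_split_first[of n q] assms(1,2,4) by simp
  note level = M_idx_level[OF \<open>2 \<le> n\<close> this, folded M_def, folded v_def]
  have tilde: "tilde n q E = (\<lambda>k. if k = 1 then 1 - E else if 2 \<le> k \<and> k \<le> M then v else q k)"
    unfolding tilde_def Let_def M_def[symmetric] v_def using assms(4) by auto
  have capped: "tilde n q E k = min (q k) v" if k: "k \<in> {2..n}" for k
  proof (cases "k \<le> M")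
    case True
    then show ?thesis
      using antitone[of k M] k level(2,3) by (simp add: tilde)
  next
    case False
    then show ?thesis
      using antitone[of "M + 1" k] k level(4) by (simp add: tilde)
  qed
  have "0 \<le> v"
  proof (cases "M < n")
    case True
    then show ?thesis using nonneg[of "M + 1"] level(1,4) by simp
  next
    case False
    then have "M = n" using level(2) by simp
    then show ?thesis using assms(3) by (simp add: v_def)
  qed
  have "{2..n} = {2..M} \<union> {M+1..n}"
    using level(1,2) by auto
  then have "(\<Sum>k\<in>{2..n}. tilde n q E k) = (\<Sum>k\<in>{2..M}. tilde n q E k) + (\<Sum>k\<in>{M+1..n}. tilde n q E k)"
    by (simp add: sum.union_disjoint)
  also have "(\<Sum>k\<in>{2..M}. tilde n q E k) = real (M - 1) * v"
    by (simp add: tilde)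
  also have "(\<Sum>k\<in>{M+1..n}. tilde n q E k) = sum q {M+1..n}"
    using level(1) by (intro sum.cong) (auto simp: tilde)
  also have "real (M - 1) * v + sum q {M+1..n} = E"
    unfolding v_def using level(1) by simp
  finally have rest_mass: "(\<Sum>k\<in>{2..n}. tilde n q E k) = E" .
  show ?thesis
  proof (rule that)
    show "0 \<le> v" "\<forall>k\<in>{2..n}. tilde n q E k = min (q k) v"
      using \<open>0 \<le> v\<close> capped by simp_all
    show "tilde n q E 1 = 1 - E"
      by (simp add: tilde)
    then show "sum (tilde n q E) {1..n} = 1"
      using sum_split_first[of n "tilde n q E"] assms(1) rest_mass by simp
    show "(\<Sum>k\<in>{2..n}. min (q k) v) = E"
      using rest_mass capped by simp
  qed
qed

lemma tilde_water_level:
  fixes q :: "nat \<Rightarrow> real"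
  assumes "2 \<le> n" "is_distr n q" "0 \<le> E" "E \<le> 1 - q 1"
    and antitone: "\<And>i j. 1 \<le> i \<Longrightarrow> i \<le> j \<Longrightarrow> j \<le> n \<Longrightarrow> q j \<le> q i"
  obtains v where "0 \<le> v" "tilde n q E 1 = 1 - E"
    "\<forall>k\<in>{2..n}. tilde n q E k = min (q k) v" "(\<Sum>k\<in>{2..n}. min (q k) v) = E"
    "sum (tilde n q E) {1..n} = 1"
proof (cases "E = 1 - q 1")
  case True
  have "min (q k) (q 1) = q k" if "k \<in> {2..n}" for k
    using antitone[of 1 k] that by simp
  moreover have "sum q {2..n} = E"
    using sum_split_first[of n q] assms(1,2) True unfolding is_distr_def by simp
  moreover have "0 \<le> q 1"
    using assms(1,2) unfolding is_distr_def by simp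
  ultimately show ?thesis
    using that[of "q 1"] True assms(2) unfolding tilde_def is_distr_def by simp
next
  case False
  then show ?thesis
    using tilde_water_level_interior[of n q E] that assms unfolding is_distr_def by auto
qed

lemma sum_min_less_imp_level_less:
  fixes f :: "'a \<Rightarrow> real"
  assumes "(\<Sum>k\<in>A. min (f k) v) < (\<Sum>k\<in>A. min (f k) w)"
  shows "v < w"
proof (rule ccontr)
  assume "\<not> v < w"
  then have "(\<Sum>k\<in>A. min (f k) w) \<le> (\<Sum>k\<in>A. min (f k) v)"
    by (intro sum_mono) auto
  with assms show False by simp
qed

lemma entropy_tilde_strict_mono:
  fixes q :: "nat \<Rightarrow> real"
  assumes "2 \<le> n" "is_distr n q"
    and antitone: "\<And>i j. 1 \<le> i \<Longrightarrow> i \<le> j \<Longrightarrow> j \<le> n \<Longrightarrow> q j \<le> q i"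
    and E: "0 \<le> E1" "E1 < E2" "E2 \<le> 1 - q 1"
  shows "entropy n (tilde n q E1) < entropy n (tilde n q E2)"
proof -
  have "E1 \<le> 1 - q 1" "0 \<le> E2"
    using E by simp_all
  obtain v1 where v1: "0 \<le> v1" "tilde n q E1 1 = 1 - E1"
    "\<forall>k\<in>{2..n}. tilde n q E1 k = min (q k) v1" "(\<Sum>k\<in>{2..n}. min (q k) v1) = E1"
    "sum (tilde n q E1) {1..n} = 1"
    by (rule tilde_water_level[OF assms(1,2) E(1) \<open>E1 \<le> 1 - q 1\<close> antitone])
  obtain v2 where v2: "0 \<le> v2" "tilde n q E2 1 = 1 - E2"
    "\<forall>k\<in>{2..n}. tilde n q E2 k = min (q k) v2" "(\<Sum>k\<in>{2..n}. min (q k) v2) = E2"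
    "sum (tilde n q E2) {1..n} = 1"
    by (rule tilde_water_level[OF assms(1,2) \<open>0 \<le> E2\<close> E(3) antitone])
  have "v1 < v2"
    using sum_min_less_imp_level_less[of q v1 "{2..n}" v2] v1(4) v2(4) E(2) by simp
  have "0 < q 1"
    using is_distr_first_pos[OF assms(2) _ antitone] assms(1) by simp
  show ?thesis
  proof (rule entropy_less_by_flattening)
    show "1 \<le> n" "sum (tilde n q E1) {1..n} = sum (tilde n q E2) {1..n}"
      using assms(1) v1(5) v2(5) by simp_all
    show "0 < tilde n q E2 1" "tilde n q E2 1 < tilde n q E1 1"
      using v1(2) v2(2) E \<open>0 < q 1\<close> by simp_all
    fix k
    assume k: "k \<in> {2..n}"
    then have "min (q k) v2 \<le> 1 - E2"
      using antitone[of 1 k] E(3) by simp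
    then show "0 \<le> tilde n q E1 k \<and> tilde n q E1 k \<le> tilde n q E2 k \<and> tilde n q E2 k \<le> tilde n q E2 1"
      using v1(1,3) v2(2,3) k \<open>v1 < v2\<close> assms(2) unfolding is_distr_def by auto
  qed
qed

theorem proposition2:
  fixes n :: nat and p :: "nat \<Rightarrow> real"
  assumes "n \<ge> 2" and "is_distr n p"
  shows "\<forall>E1 E2. 0 \<le> E1 \<and> E1 < E2 \<and> E2 \<le> 1 - sort_desc n p 1 \<longrightarrow>
           entropy n (tilde n (sort_desc n p) E1) < entropy n (tilde n (sort_desc n p) E2)"
  using entropy_tilde_strict_mono[OF assms(1) is_distr_sort_desc[OF assms(2)] sort_desc_antitone]
  by blast

end
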